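(* Let $p\in\{1,\dots,d\}$, $\tau\in\{1,\dots,n-1\}$ and $r>0$. (1) If $c_1\in(0,\sqrt2-1)$ and $H\le(\sqrt2-1-c_1)\frac{r^2nh(\tau)}{\sqrt{2d}}$, then $$\beta(\psi_{\mathrm{lin}},\Theta_p[r],\tau)\le\sqrt e\exp\Bigl\{-c_1\frac{r^2nh(\tau)}{\sqrt{2d}}\Bigr\}.$$ (2) For $T_p>0$ let $c_2=c_2(p,\tau,r)=(1+\sqrt{2/p})^{-1}\frac{r^2nh(\tau)}{T_p\sqrt{2p}}$. Then $$\beta(\psi^p_{\mathrm{scan}},\Theta_p[r],\tau)\le\sqrt e\exp\{-(c_2-1)T_p\}.$$
   Context: Model: for integers $n\ge2$, $d\ge1$ and a fixed baseline mean $\theta\in\mathbb R^d$, we observe independent vectors $X_i=\theta+\Delta\theta_\tau\mathbf 1\{i>\tau\}+\xi_i$, $i=1,\dots,n$, with $\xi_i$ i.i.d. $\mathcal N(0,I_d)$; $\mathbf E_{\Delta\theta_\tau}$ denotes expectation when there is a jump $\Delta\theta_\tau$ at location $\tau$. $V_p^d=\{(\varepsilon_1v_1,\dots,\varepsilon_dv_d):v\in\mathbb R^d,\ \varepsilon_j\in\{0,1\},\ \sum_j\varepsilon_j=p\}$, $\Theta_p[r]=\{v\in V_p^d:\|v\|\ge r\}$, $h(\tau)=\frac\tau n(1-\frac\tau n)$. For $s\in\{1,\dots,n-1\}$, $Z_n(s)=\sqrt{\frac{s(n-s)}n}\bigl(\frac1s\sum_{i=1}^sX_i-\frac1{n-s}\sum_{i=s+1}^nX_i\bigr)$.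 $\mathcal M(d,p)$ is the family of $p$-element subsets of $\{1,\dots,d\}$; $\Pi_mv$ sets to zero the coordinates of $v$ outside $m$. $L_{\mathrm{lin}}(s)=(\|Z_n(s)\|^2-d)/\sqrt{2d}$, $L^p_{\mathrm{scan}}(s)=\max_{m\in\mathcal M(d,p)}(\|\Pi_mZ_n(s)\|^2-p)/\sqrt{2p}$; $\psi_{\mathrm{lin}}=\mathbf 1\{L_{\mathrm{lin}}(\tau)>H\}$, $\psi^p_{\mathrm{scan}}=\mathbf 1\{L^p_{\mathrm{scan}}(\tau)>T_p\}$. $\beta(\psi,\Theta_p[r],\tau)=\sup_{\Delta\theta_\tau\in\Theta_p[r]}\mathbf E_{\Delta\theta_\tau}(1-\psi)$. *)

theory Defs
  imports "HOL-Probability.Probability"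
begin

text \<open>Dimension d is CARD('d). Noise: xi i has i.i.d. N(0,1) coordinates, i = 1..n.\<close>

definition noise_space :: "nat \<Rightarrow> (nat \<Rightarrow> 'd::finite \<Rightarrow> real) measure" where
  "noise_space n = PiM {1..n} (\<lambda>_. PiM (UNIV :: 'd set) (\<lambda>_. density lborel std_normal_density))"

definition obs :: "real^'d \<Rightarrow> real^'d \<Rightarrow> nat \<Rightarrow> (nat \<Rightarrow> 'd::finite \<Rightarrow> real) \<Rightarrow> nat \<Rightarrow> real^'d" where
  "obs \<theta> \<Delta> \<tau> \<xi> i = \<theta> + (if i > \<tau> then \<Delta> else 0) + vec_lambda (\<xi> i)"

definition hfun :: "nat \<Rightarrow> nat \<Rightarrow> real" where
  "hfun n \<tau> = (real \<tau> / real n) * (1 - real \<tau> / real n)"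

definition Zn :: "nat \<Rightarrow> (nat \<Rightarrow> real^'d::finite) \<Rightarrow> nat \<Rightarrow> real^'d" where
  "Zn n X s = sqrt (real s * real (n - s) / real n) *\<^sub>R
      ((1 / real s) *\<^sub>R (\<Sum>i = 1..s. X i) - (1 / real (n - s)) *\<^sub>R (\<Sum>i = s + 1..n. X i))"

definition Vpd :: "nat \<Rightarrow> (real^'d::finite) set" where
  "Vpd p = {(\<chi> j. \<epsilon> j * v $ j) | v \<epsilon>. (\<forall>j. \<epsilon> j \<in> {0, 1}) \<and> (\<Sum>j\<in>UNIV. \<epsilon> j) = real p}"

definition Theta :: "nat \<Rightarrow> real \<Rightarrow> (real^'d::finite) set" where
  "Theta p r = {v \<in> Vpd p. norm v \<ge> r}"

definition Proj :: "'d set \<Rightarrow> real^'d::finite \<Rightarrow> real^'d" where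
  "Proj m v = (\<chi> j. if j \<in> m then v $ j else 0)"

definition Lfam :: "nat \<Rightarrow> 'd::finite set set" where
  "Lfam p = {m. card m = p}"

definition L_lin :: "nat \<Rightarrow> (nat \<Rightarrow> real^'d::finite) \<Rightarrow> nat \<Rightarrow> real" where
  "L_lin n X s = ((norm (Zn n X s))\<^sup>2 - real CARD('d)) / sqrt (2 * real CARD('d))"

definition L_scan :: "nat \<Rightarrow> nat \<Rightarrow> (nat \<Rightarrow> real^'d::finite) \<Rightarrow> nat \<Rightarrow> real" where
  "L_scan p n X s = Max ((\<lambda>m. ((norm (Proj m (Zn n X s)))\<^sup>2 - real p) / sqrt (2 * real p)) ` (Lfam p :: 'd set set))"

definition psi_lin :: "real \<Rightarrow> nat \<Rightarrow> nat \<Rightarrow> (nat \<Rightarrow> real^'d::finite) \<Rightarrow> real" where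
  "psi_lin H n \<tau> X = (if L_lin n X \<tau> > H then 1 else 0)"

definition psi_scan :: "nat \<Rightarrow> real \<Rightarrow> nat \<Rightarrow> nat \<Rightarrow> (nat \<Rightarrow> real^'d::finite) \<Rightarrow> real" where
  "psi_scan p T n \<tau> X = (if L_scan p n X \<tau> > T then 1 else 0)"

definition beta :: "nat \<Rightarrow> real^'d::finite \<Rightarrow> ((nat \<Rightarrow> real^'d) \<Rightarrow> real) \<Rightarrow> (real^'d) set \<Rightarrow> nat \<Rightarrow> real" where
  "beta n \<theta> \<psi> \<Theta> \<tau> = Sup ((\<lambda>\<Delta>. integral\<^sup>L (noise_space n) (\<lambda>\<xi>. 1 - \<psi> (obs \<theta> \<Delta> \<tau> \<xi>))) ` \<Theta>)"

end

theory Submission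
  imports Defs
begin

text \<open>Under a jump \<open>\<Delta>\<close> at \<open>\<tau>\<close> the statistic \<open>Zn n X \<tau>\<close> is the Gaussian vector
  \<open>- sqrt (n h(\<tau>)) \<Delta> + N(0, I)\<close>, because the CUSUM weights have unit Euclidean norm.
  Both tests accept only if the squared norm of \<open>Zn n X \<tau>\<close> restricted to a set \<open>m\<close> of \<open>k\<close>
  coordinates carrying \<open>\<Delta>\<close> (all coordinates for the linear test, the support of \<open>\<Delta>\<close> for the
  scan test) is at most \<open>k + T sqrt (2k)\<close>. Hence the type II error is bounded by the Chernoff
  bound \<open>E exp (T - (\<parallel>\<Pi>\<^sub>m Z\<parallel>\<^sup>2 - k) / sqrt (2k))\<close>, which is computed exactly from the Laplace
  transform of a noncentral chi-square variable. The inequality \<open>ln (1 + x) \<ge> x - x\<^sup>2/2\<close>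
  turns it into \<open>sqrt e * exp (T - n h(\<tau>) \<parallel>\<Delta>\<parallel>\<^sup>2 / (sqrt (2k) + 2))\<close>; both claims are this bound,
  with \<open>k = d, T = H\<close> and with \<open>k = p, T = T\<^sub>p\<close>.\<close>

section \<open>Laplace transform of a noncentral chi-square variable\<close>

text \<open>\<open>nc_chisq_laplace \<alpha> S c\<close> is \<open>E exp (- \<alpha> X\<^sup>2)\<close> for \<open>X \<sim> N(c, S)\<close>.\<close>

definition nc_chisq_laplace :: "real \<Rightarrow> real \<Rightarrow> real \<Rightarrow> real" where
  "nc_chisq_laplace \<alpha> S c = exp (- \<alpha> * c\<^sup>2 / (1 + 2 * \<alpha> * S)) / sqrt (1 + 2 * \<alpha> * S)"

lemma nc_chisq_laplace_nonneg: "\<alpha> \<ge> 0 \<Longrightarrow> S \<ge> 0 \<Longrightarrow> nc_chisq_laplace \<alpha> S c \<ge> 0"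
  unfolding nc_chisq_laplace_def by (intro divide_nonneg_nonneg) auto

lemma nc_chisq_laplace_add_variance:
  fixes a w S c :: real
  assumes "a \<ge> 0" "S \<ge> 0"
  defines "A \<equiv> 1 + 2 * a * w\<^sup>2"
  shows "nc_chisq_laplace a (w\<^sup>2 + S) c = nc_chisq_laplace (a / A) S c / sqrt A"
proof -
  have A: "A > 0" unfolding A_def using assms by (simp add: add_pos_nonneg)
  have B: "1 + 2 * a * (w\<^sup>2 + S) > 0" using assms by (simp add: add_pos_nonneg)
  have e: "1 + 2 * (a / A) * S = (1 + 2 * a * (w\<^sup>2 + S)) / A"
    using A unfolding A_def by (simp add: field_simps)
  have "a * c\<^sup>2 / (1 + 2 * a * (w\<^sup>2 + S)) = (a / A) * c\<^sup>2 / (1 + 2 * (a / A) * S)"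
    unfolding e using A B by (simp add: field_simps)
  moreover have "sqrt (1 + 2 * a * (w\<^sup>2 + S)) = sqrt (1 + 2 * (a / A) * S) * sqrt A"
    unfolding e using A by (simp add: real_sqrt_divide)
  ultimately show ?thesis unfolding nc_chisq_laplace_def by simp
qed

lemma gaussian_exponent_complete_square:
  fixes \<alpha> c w y D :: real
  assumes D: "D = 1 + 2 * \<alpha> * w\<^sup>2" "D > 0"
  shows "- y\<^sup>2 / 2 - \<alpha> * (c + w * y)\<^sup>2
      = - \<alpha> * c\<^sup>2 / D - D * (y + 2 * \<alpha> * c * w / D)\<^sup>2 / 2"
proof -
  have "(- y\<^sup>2 / 2 - \<alpha> * (c + w * y)\<^sup>2) * D = - \<alpha> * c\<^sup>2 - (D * y + 2 * \<alpha> * c * w)\<^sup>2 / 2"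
    unfolding D(1) by (simp add: field_simps power2_eq_square)
  then have "- y\<^sup>2 / 2 - \<alpha> * (c + w * y)\<^sup>2 = (- \<alpha> * c\<^sup>2 - (D * y + 2 * \<alpha> * c * w)\<^sup>2 / 2) / D"
    using D(2) by (simp add: eq_divide_eq)
  also have "\<dots> = - \<alpha> * c\<^sup>2 / D - D * (y + 2 * \<alpha> * c * w / D)\<^sup>2 / 2"
    using D(2) by (simp add: field_simps power2_eq_square)
  finally show ?thesis .
qed

lemma std_normal_density_times_exp_sq:
  fixes \<alpha> c w y :: real
  assumes "\<alpha> \<ge> 0"
  defines "D \<equiv> 1 + 2 * \<alpha> * w\<^sup>2"
  shows "std_normal_density y * exp (- \<alpha> * (c + w * y)\<^sup>2)
    = nc_chisq_laplace \<alpha> (w\<^sup>2) c * normal_density (- 2 * \<alpha> * c * w / D) (1 / sqrt D) y"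
proof -
  have D: "D > 0" unfolding D_def using assms by (simp add: add_pos_nonneg)
  have scale: "sqrt (2 * pi * (1 / sqrt D)\<^sup>2) = sqrt (2 * pi) / sqrt D"
    using D by (simp add: power_divide real_sqrt_divide)
  have "std_normal_density y * exp (- \<alpha> * (c + w * y)\<^sup>2)
      = exp (- y\<^sup>2 / 2 - \<alpha> * (c + w * y)\<^sup>2) / sqrt (2 * pi)"
    by (simp add: std_normal_density_def exp_add[symmetric])
  also have "\<dots> = exp (- \<alpha> * c\<^sup>2 / D) * exp (- (D * (y + 2 * \<alpha> * c * w / D)\<^sup>2 / 2)) / sqrt (2 * pi)"
    unfolding gaussian_exponent_complete_square[OF meta_eq_to_obj_eq[OF D_def] D]
    by (simp add: exp_add[symmetric])
  finally show ?thesis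
    using D unfolding normal_density_def nc_chisq_laplace_def D_def[symmetric] scale
    by (simp add: power_divide)
qed

abbreviation std_normal :: "real measure" where
  "std_normal \<equiv> density lborel std_normal_density"

lemma nn_integral_std_normal_exp_sq:
  fixes \<alpha> c w :: real
  assumes "\<alpha> \<ge> 0"
  shows "(\<integral>\<^sup>+y. ennreal (exp (- \<alpha> * (c + w * y)\<^sup>2)) \<partial>std_normal) = ennreal (nc_chisq_laplace \<alpha> (w\<^sup>2) c)"
proof -
  define D where "D = 1 + 2 * \<alpha> * w\<^sup>2"
  define \<mu> where "\<mu> = - 2 * \<alpha> * c * w / D"
  have laplace_nonneg: "nc_chisq_laplace \<alpha> (w\<^sup>2) c \<ge> 0"
    using assms by (simp add: nc_chisq_laplace_nonneg)
  have "1 / sqrt D > 0"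
    using assms unfolding D_def by (simp add: add_pos_nonneg)
  have "(\<integral>\<^sup>+y. ennreal (exp (- \<alpha> * (c + w * y)\<^sup>2)) \<partial>std_normal)
      = (\<integral>\<^sup>+y. ennreal (std_normal_density y * exp (- \<alpha> * (c + w * y)\<^sup>2)) \<partial>lborel)"
    by (subst nn_integral_density) (auto simp: ennreal_mult)
  also have "\<dots> = (\<integral>\<^sup>+y. ennreal (nc_chisq_laplace \<alpha> (w\<^sup>2) c * normal_density \<mu> (1 / sqrt D) y) \<partial>lborel)"
    by (simp only: std_normal_density_times_exp_sq[OF assms] \<mu>_def D_def)
  also have "\<dots> = (\<integral>\<^sup>+y. ennreal (nc_chisq_laplace \<alpha> (w\<^sup>2) c) * ennreal (normal_density \<mu> (1 / sqrt D) y) \<partial>lborel)"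
    using laplace_nonneg by (simp add: ennreal_mult)
  also have "\<dots> = ennreal (nc_chisq_laplace \<alpha> (w\<^sup>2) c) * (\<integral>\<^sup>+y. ennreal (normal_density \<mu> (1 / sqrt D) y) \<partial>lborel)"
    by (rule nn_integral_cmult) simp
  also have "(\<integral>\<^sup>+y. ennreal (normal_density \<mu> (1 / sqrt D) y) \<partial>lborel) = 1"
    using \<open>1 / sqrt D > 0\<close> by (subst nn_integral_eq_integral) auto
  finally show ?thesis by simp
qed

lemma nn_integral_PiM_std_normal_prod_exp_sq:
  fixes \<alpha> b :: "'d::finite \<Rightarrow> real" and w :: real
  assumes "\<And>j. \<alpha> j \<ge> 0"
  shows "(\<integral>\<^sup>+y. (\<Prod>j\<in>UNIV. ennreal (exp (- \<alpha> j * (b j + w * y j)\<^sup>2))) \<partial>PiM UNIV (\<lambda>_. std_normal))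
    = (\<Prod>j\<in>UNIV. ennreal (nc_chisq_laplace (\<alpha> j) (w\<^sup>2) (b j)))"
proof -
  interpret product_sigma_finite "\<lambda>_::'d. std_normal"
    by (simp add: product_sigma_finite_def prob_space_normal_density prob_space_imp_sigma_finite)
  have "(\<integral>\<^sup>+y. (\<Prod>j\<in>UNIV. ennreal (exp (- \<alpha> j * (b j + w * y j)\<^sup>2))) \<partial>PiM UNIV (\<lambda>_. std_normal))
      = (\<Prod>j\<in>UNIV. \<integral>\<^sup>+z. ennreal (exp (- \<alpha> j * (b j + w * z)\<^sup>2)) \<partial>std_normal)"
    by (rule product_nn_integral_prod[where f = "\<lambda>j z. ennreal (exp (- \<alpha> j * (b j + w * z)\<^sup>2))"]) auto
  also have "\<dots> = (\<Prod>j\<in>UNIV. ennreal (nc_chisq_laplace (\<alpha> j) (w\<^sup>2) (b j)))"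
    using assms by (intro prod.cong refl nn_integral_std_normal_exp_sq)
  finally show ?thesis .
qed

lemma measurable_component_component:
  "k \<in> I \<Longrightarrow> j \<in> J \<Longrightarrow> (\<lambda>x. x k j) \<in> borel_measurable (PiM I (\<lambda>_. PiM J (\<lambda>_. borel)))"
  using measurable_compose[OF measurable_component_singleton[of k I "\<lambda>_. PiM J (\<lambda>_. borel)"]
      measurable_component_singleton[of j J "\<lambda>_. borel"]]
  by simp

lemma product_sigma_finite_PiM_std_normal:
  "product_sigma_finite (\<lambda>_::'i. PiM (UNIV :: 'd::finite set) (\<lambda>_. std_normal))"
  by (simp add: product_sigma_finite_def prob_space_imp_sigma_finite prob_space_PiM prob_space_normal_density)

text \<open>The Gaussian vector \<open>c + \<Sum>i. w i * \<xi> i\<close> has law \<open>N(c, (\<Sum>i. (w i)\<^sup>2) I)\<close>; the induction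
  integrates out one \<open>\<xi> i\<close> at a time, which rescales each \<open>\<alpha> j\<close> to \<open>\<alpha> j / (1 + 2 * \<alpha> j * (w i)\<^sup>2)\<close>.\<close>
lemma nn_integral_PiM_std_normal_exp_sq_lincomb:
  fixes \<alpha> c :: "'d::finite \<Rightarrow> real" and w :: "nat \<Rightarrow> real"
  assumes "finite I" "\<And>j. \<alpha> j \<ge> 0"
  shows "(\<integral>\<^sup>+\<xi>. (\<Prod>j\<in>UNIV. ennreal (exp (- \<alpha> j * (c j + (\<Sum>i\<in>I. w i * \<xi> i j))\<^sup>2)))
      \<partial>PiM I (\<lambda>_. PiM UNIV (\<lambda>_. std_normal)))
    = (\<Prod>j\<in>UNIV. ennreal (nc_chisq_laplace (\<alpha> j) (\<Sum>i\<in>I. (w i)\<^sup>2) (c j)))"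
  using assms
proof (induction I arbitrary: \<alpha> rule: finite_induct)
  case empty
  interpret product_sigma_finite "\<lambda>_::nat. PiM (UNIV :: 'd set) (\<lambda>_. std_normal)"
    by (rule product_sigma_finite_PiM_std_normal)
  show ?case by (subst nn_integral_empty) (auto simp: nc_chisq_laplace_def)
next
  case (insert i I)
  interpret product_sigma_finite "\<lambda>_::nat. PiM (UNIV :: 'd set) (\<lambda>_. std_normal)"
    by (rule product_sigma_finite_PiM_std_normal)
  define A where "A j = 1 + 2 * \<alpha> j * (w i)\<^sup>2" for j
  define \<alpha>' where "\<alpha>' j = \<alpha> j / A j" for j
  define S where "S = (\<Sum>k\<in>I. (w k)\<^sup>2)"
  define b where "b x j = c j + (\<Sum>k\<in>I. w k * x k j)" for x :: "nat \<Rightarrow> 'd \<Rightarrow> real" and j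
  have A_pos: "A j > 0" for j
    unfolding A_def using insert.prems by (simp add: add_pos_nonneg)
  have \<alpha>'_nonneg: "\<alpha>' j \<ge> 0" for j
    unfolding \<alpha>'_def using A_pos insert.prems by (simp add: less_imp_le)
  have S_nonneg: "S \<ge> 0"
    unfolding S_def by (simp add: sum_nonneg)
  have laplace_split: "ennreal (nc_chisq_laplace (\<alpha> j) ((w i)\<^sup>2) z)
      = ennreal (1 / sqrt (A j)) * ennreal (exp (- \<alpha>' j * z\<^sup>2))" for j z
  proof -
    have "nc_chisq_laplace (\<alpha> j) ((w i)\<^sup>2) z = 1 / sqrt (A j) * exp (- \<alpha>' j * z\<^sup>2)"
      unfolding nc_chisq_laplace_def \<alpha>'_def A_def by simp
    then show ?thesis
      using A_pos[of j] by (simp only:) (rule ennreal_mult; simp)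
  qed
  have laplace_merge: "ennreal (1 / sqrt (A j)) * ennreal (nc_chisq_laplace (\<alpha>' j) S (c j))
      = ennreal (nc_chisq_laplace (\<alpha> j) ((w i)\<^sup>2 + S) (c j))" for j
  proof -
    have "nc_chisq_laplace (\<alpha> j) ((w i)\<^sup>2 + S) (c j) = 1 / sqrt (A j) * nc_chisq_laplace (\<alpha>' j) S (c j)"
      using nc_chisq_laplace_add_variance[OF insert.prems S_nonneg] unfolding \<alpha>'_def A_def by simp
    then show ?thesis
      using A_pos[of j] \<alpha>'_nonneg[of j] S_nonneg
      by (simp only:) (rule ennreal_mult[symmetric]; simp add: nc_chisq_laplace_nonneg)
  qed
  have inner: "(\<integral>\<^sup>+y. (\<Prod>j\<in>UNIV. ennreal (exp (- \<alpha> j * (c j + (\<Sum>k\<in>insert i I. w k * (x(i := y)) k j))\<^sup>2)))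
        \<partial>PiM UNIV (\<lambda>_. std_normal))
      = (\<Prod>j\<in>UNIV. ennreal (1 / sqrt (A j))) * (\<Prod>j\<in>UNIV. ennreal (exp (- \<alpha>' j * (b x j)\<^sup>2)))" for x
  proof -
    have "(\<Sum>k\<in>insert i I. w k * (x(i := y)) k j) = w i * y j + (\<Sum>k\<in>I. w k * x k j)" for y j
    proof -
      have "(\<Sum>k\<in>I. w k * (x(i := y)) k j) = (\<Sum>k\<in>I. w k * x k j)"
        using insert.hyps(2) by (intro sum.cong) auto
      then show ?thesis using insert.hyps by simp
    qed
    then have "(\<integral>\<^sup>+y. (\<Prod>j\<in>UNIV. ennreal (exp (- \<alpha> j * (c j + (\<Sum>k\<in>insert i I. w k * (x(i := y)) k j))\<^sup>2)))
          \<partial>PiM UNIV (\<lambda>_. std_normal))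
        = (\<integral>\<^sup>+y. (\<Prod>j\<in>UNIV. ennreal (exp (- \<alpha> j * (b x j + w i * y j)\<^sup>2))) \<partial>PiM UNIV (\<lambda>_. std_normal))"
      unfolding b_def by (simp add: add_ac)
    also have "\<dots> = (\<Prod>j\<in>UNIV. ennreal (1 / sqrt (A j)) * ennreal (exp (- \<alpha>' j * (b x j)\<^sup>2)))"
      by (simp only: nn_integral_PiM_std_normal_prod_exp_sq[OF insert.prems] laplace_split)
    finally show ?thesis by (simp add: prod.distrib)
  qed
  have "(\<integral>\<^sup>+\<xi>. (\<Prod>j\<in>UNIV. ennreal (exp (- \<alpha> j * (c j + (\<Sum>k\<in>insert i I. w k * \<xi> k j))\<^sup>2)))
        \<partial>PiM (insert i I) (\<lambda>_. PiM UNIV (\<lambda>_. std_normal)))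
      = (\<integral>\<^sup>+x. (\<Prod>j\<in>UNIV. ennreal (1 / sqrt (A j))) * (\<Prod>j\<in>UNIV. ennreal (exp (- \<alpha>' j * (b x j)\<^sup>2)))
        \<partial>PiM I (\<lambda>_. PiM UNIV (\<lambda>_. std_normal)))"
    by (subst product_nn_integral_insert[OF insert.hyps]) (simp_all only: inner, measurable,
        auto intro: measurable_component_component)
  also have "\<dots> = (\<Prod>j\<in>UNIV. ennreal (1 / sqrt (A j))) * (\<Prod>j\<in>UNIV. ennreal (nc_chisq_laplace (\<alpha>' j) S (c j)))"
    unfolding b_def S_def using insert.IH[OF \<alpha>'_nonneg]
    by (subst nn_integral_cmult) (measurable, auto intro: measurable_component_component)
  also have "\<dots> = (\<Prod>j\<in>UNIV. ennreal (nc_chisq_laplace (\<alpha> j) (\<Sum>k\<in>insert i I. (w k)\<^sup>2) (c j)))"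
    using insert.hyps by (simp add: prod.distrib[symmetric] laplace_merge flip: S_def)
  finally show ?case .
qed

section \<open>The CUSUM statistic under the alternative\<close>

definition jump_scale :: "nat \<Rightarrow> nat \<Rightarrow> real" where
  "jump_scale n \<tau> = sqrt (real \<tau> * real (n - \<tau>) / real n)"

definition cusum_weight :: "nat \<Rightarrow> nat \<Rightarrow> nat \<Rightarrow> real" where
  "cusum_weight n \<tau> i = (if i \<le> \<tau> then jump_scale n \<tau> / real \<tau> else - jump_scale n \<tau> / real (n - \<tau>))"

lemma jump_scale_sq: "(jump_scale n \<tau>)\<^sup>2 = real \<tau> * real (n - \<tau>) / real n"
  unfolding jump_scale_def by simp

lemma jump_scale_sq_hfun: "\<tau> \<le> n \<Longrightarrow> (jump_scale n \<tau>)\<^sup>2 = real n * hfun n \<tau>"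
  by (cases "n = 0") (auto simp: jump_scale_sq hfun_def of_nat_diff field_simps)

lemma sum_atLeastAtMost_split_nat:
  fixes f :: "nat \<Rightarrow> 'a::comm_monoid_add"
  assumes "\<tau> \<le> n"
  shows "(\<Sum>i = 1..n. f i) = (\<Sum>i = 1..\<tau>. f i) + (\<Sum>i = \<tau> + 1..n. f i)"
  using sum.ub_add_nat[of 1 \<tau> f "n - \<tau>"] assms by simp

lemma Zn_obs_component:
  fixes \<theta> \<Delta> :: "real^'d::finite"
  assumes "1 \<le> \<tau>" "\<tau> < n"
  shows "Zn n (obs \<theta> \<Delta> \<tau> \<xi>) \<tau> $ j = - jump_scale n \<tau> * \<Delta> $ j + (\<Sum>i = 1..n. cusum_weight n \<tau> i * \<xi> i j)"
proof -
  let ?X = "obs \<theta> \<Delta> \<tau> \<xi>" and ?\<kappa> = "jump_scale n \<tau>"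
  define a where "a = real \<tau>"
  define b where "b = real (n - \<tau>)"
  have pos: "a > 0" "b > 0"
    using assms unfolding a_def b_def by auto
  have before: "(\<Sum>i = 1..\<tau>. ?X i $ j) = a * \<theta> $ j + (\<Sum>i = 1..\<tau>. \<xi> i j)"
    unfolding a_def by (simp add: obs_def sum.distrib)
  have "(\<Sum>i = \<tau> + 1..n. ?X i $ j) = (\<Sum>i = \<tau> + 1..n. (\<theta> $ j + \<Delta> $ j) + \<xi> i j)"
    by (intro sum.cong) (auto simp: obs_def)
  then have after: "(\<Sum>i = \<tau> + 1..n. ?X i $ j) = b * (\<theta> $ j + \<Delta> $ j) + (\<Sum>i = \<tau> + 1..n. \<xi> i j)"
    unfolding b_def by (simp add: sum.distrib)
  have "(\<Sum>i = 1..\<tau>. cusum_weight n \<tau> i * \<xi> i j) = (\<Sum>i = 1..\<tau>. ?\<kappa> / a * \<xi> i j)"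
    unfolding a_def by (intro sum.cong) (auto simp: cusum_weight_def)
  moreover have "(\<Sum>i = \<tau> + 1..n. cusum_weight n \<tau> i * \<xi> i j) = (\<Sum>i = \<tau> + 1..n. - ?\<kappa> / b * \<xi> i j)"
    unfolding b_def by (intro sum.cong) (auto simp: cusum_weight_def)
  ultimately have weights: "(\<Sum>i = 1..n. cusum_weight n \<tau> i * \<xi> i j)
      = ?\<kappa> / a * (\<Sum>i = 1..\<tau>. \<xi> i j) - ?\<kappa> / b * (\<Sum>i = \<tau> + 1..n. \<xi> i j)"
    unfolding sum_atLeastAtMost_split_nat[OF less_imp_le[OF assms(2)]]
    by (simp add: sum_distrib_left sum_negf)
  have "Zn n ?X \<tau> $ j = ?\<kappa> * ((1 / a) * (\<Sum>i = 1..\<tau>. ?X i $ j) - (1 / b) * (\<Sum>i = \<tau> + 1..n. ?X i $ j))"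
    unfolding Zn_def jump_scale_def a_def b_def by simp
  also have "\<dots> = - ?\<kappa> * \<Delta> $ j + (?\<kappa> / a * (\<Sum>i = 1..\<tau>. \<xi> i j) - ?\<kappa> / b * (\<Sum>i = \<tau> + 1..n. \<xi> i j))"
    unfolding before after using pos by (simp add: field_simps)
  finally show ?thesis
    unfolding weights .
qed

lemma sum_cusum_weight_sq:
  assumes "1 \<le> \<tau>" "\<tau> < n"
  shows "(\<Sum>i = 1..n. (cusum_weight n \<tau> i)\<^sup>2) = 1"
proof -
  define a where "a = real \<tau>"
  define b where "b = real (n - \<tau>)"
  have pos: "a > 0" "b > 0"
    using assms unfolding a_def b_def by auto
  have \<kappa>_sq: "(jump_scale n \<tau>)\<^sup>2 = a * b / (a + b)"
    using assms unfolding jump_scale_sq a_def b_def by (simp add: of_nat_diff)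
  have "(\<Sum>i = 1..\<tau>. (cusum_weight n \<tau> i)\<^sup>2) = (\<Sum>i = 1..\<tau>. (jump_scale n \<tau> / a)\<^sup>2)"
    unfolding a_def by (intro sum.cong) (auto simp: cusum_weight_def)
  moreover have "(\<Sum>i = \<tau> + 1..n. (cusum_weight n \<tau> i)\<^sup>2) = (\<Sum>i = \<tau> + 1..n. (jump_scale n \<tau> / b)\<^sup>2)"
    unfolding b_def by (intro sum.cong) (auto simp: cusum_weight_def power2_eq_square)
  ultimately have "(\<Sum>i = 1..n. (cusum_weight n \<tau> i)\<^sup>2) = a * (jump_scale n \<tau> / a)\<^sup>2 + b * (jump_scale n \<tau> / b)\<^sup>2"
    unfolding sum_atLeastAtMost_split_nat[OF less_imp_le[OF assms(2)]] using assms by (simp add: a_def b_def)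
  also have "\<dots> = (jump_scale n \<tau>)\<^sup>2 * (a + b) / (a * b)"
    using pos by (simp add: power2_eq_square field_simps)
  also have "\<dots> = 1"
    using pos unfolding \<kappa>_sq by simp
  finally show ?thesis .
qed

lemma nn_integral_noise_exp_quadratic_Zn:
  fixes \<theta> \<Delta> :: "real^'d::finite" and a :: "'d \<Rightarrow> real"
  assumes "1 \<le> \<tau>" "\<tau> < n" "\<And>j. a j \<ge> 0"
  shows "(\<integral>\<^sup>+\<xi>. ennreal (exp (t - (\<Sum>j\<in>UNIV. a j * (Zn n (obs \<theta> \<Delta> \<tau> \<xi>) \<tau> $ j)\<^sup>2))) \<partial>noise_space n)
    = ennreal (exp t * (\<Prod>j\<in>UNIV. nc_chisq_laplace (a j) 1 (- jump_scale n \<tau> * \<Delta> $ j)))"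
proof -
  let ?c = "\<lambda>j. - jump_scale n \<tau> * \<Delta> $ j"
  let ?g = "\<lambda>\<xi>. \<Prod>j\<in>UNIV. ennreal (exp (- a j * (?c j + (\<Sum>i = 1..n. cusum_weight n \<tau> i * \<xi> i j))\<^sup>2))"
  have "ennreal (exp (t - (\<Sum>j\<in>UNIV. a j * (Zn n (obs \<theta> \<Delta> \<tau> \<xi>) \<tau> $ j)\<^sup>2))) = ennreal (exp t) * ?g \<xi>" for \<xi>
    by (simp add: Zn_obs_component[OF assms(1,2)] exp_diff exp_sum[symmetric] divide_inverse
        exp_minus[symmetric] sum_negf prod_ennreal ennreal_mult)
  then have "(\<integral>\<^sup>+\<xi>. ennreal (exp (t - (\<Sum>j\<in>UNIV. a j * (Zn n (obs \<theta> \<Delta> \<tau> \<xi>) \<tau> $ j)\<^sup>2))) \<partial>noise_space n)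
      = ennreal (exp t) * (\<integral>\<^sup>+\<xi>. ?g \<xi> \<partial>PiM {1..n} (\<lambda>_. PiM UNIV (\<lambda>_. std_normal)))"
    unfolding noise_space_def
    by (simp only:) (rule nn_integral_cmult, measurable, auto intro: measurable_component_component)
  also have "(\<integral>\<^sup>+\<xi>. ?g \<xi> \<partial>PiM {1..n} (\<lambda>_. PiM UNIV (\<lambda>_. std_normal)))
      = (\<Prod>j\<in>UNIV. ennreal (nc_chisq_laplace (a j) (\<Sum>i = 1..n. (cusum_weight n \<tau> i)\<^sup>2) (?c j)))"
    using assms(3) by (rule nn_integral_PiM_std_normal_exp_sq_lincomb[OF finite_atLeastAtMost])
  also have "\<dots> = ennreal (\<Prod>j\<in>UNIV. nc_chisq_laplace (a j) 1 (?c j))"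
    unfolding sum_cusum_weight_sq[OF assms(1,2)] using assms(3)
    by (simp add: prod_ennreal nc_chisq_laplace_nonneg)
  finally show ?thesis
    using assms(3) by (simp add: ennreal_mult nc_chisq_laplace_nonneg prod_nonneg)
qed

lemma norm_Proj_sq: "(norm (Proj m z))\<^sup>2 = (\<Sum>j\<in>m. (z $ j)\<^sup>2)"
proof -
  have "(norm (Proj m z))\<^sup>2 = (\<Sum>j\<in>UNIV. (Proj m z $ j)\<^sup>2)"
    unfolding norm_vec_def L2_set_def by (simp add: sum_nonneg)
  also have "\<dots> = (\<Sum>j\<in>UNIV. if j \<in> m then (z $ j)\<^sup>2 else 0)"
    by (intro sum.cong) (auto simp: Proj_def)
  also have "\<dots> = (\<Sum>j\<in>m. (z $ j)\<^sup>2)"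
    by (simp add: sum.If_cases)
  finally show ?thesis .
qed

lemma Proj_UNIV [simp]: "Proj UNIV z = z"
  unfolding Proj_def by (simp add: vec_eq_iff)

lemma Proj_eq_self: "(\<And>j. j \<notin> m \<Longrightarrow> z $ j = 0) \<Longrightarrow> Proj m z = z"
  unfolding Proj_def by (simp add: vec_eq_iff)

lemma prod_nc_chisq_laplace_indicator:
  fixes c :: "'d::finite \<Rightarrow> real"
  shows "(\<Prod>j\<in>UNIV. nc_chisq_laplace (if j \<in> m then \<gamma> else 0) 1 (c j))
    = exp (- \<gamma> * (\<Sum>j\<in>m. (c j)\<^sup>2) / (1 + 2 * \<gamma>)) / sqrt (1 + 2 * \<gamma>) ^ card m"
proof -
  have "(\<Prod>j\<in>UNIV. nc_chisq_laplace (if j \<in> m then \<gamma> else 0) 1 (c j))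
      = (\<Prod>j\<in>m. nc_chisq_laplace \<gamma> 1 (c j))"
  proof -
    have "nc_chisq_laplace (if j \<in> m then \<gamma> else 0) 1 (c j) = (if j \<in> m then nc_chisq_laplace \<gamma> 1 (c j) else 1)" for j
      by (simp add: nc_chisq_laplace_def)
    then show ?thesis by (simp add: prod.If_cases)
  qed
  then show ?thesis
    by (simp add: nc_chisq_laplace_def prod_dividef exp_sum[symmetric] sum_divide_distrib sum_distrib_left)
qed

section \<open>Type II error bounds\<close>

lemma ln_one_plus_ge_sub_half_sq:
  fixes x :: real
  assumes "x \<ge> 0"
  shows "x - x\<^sup>2 / 2 \<le> ln (1 + x)"
proof -
  let ?f = "\<lambda>y::real. ln (1 + y) - y + y\<^sup>2 / 2"
  have "?f 0 \<le> ?f x"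
  proof (rule DERIV_nonneg_imp_nondecreasing[OF assms])
    fix y :: real
    assume y: "0 \<le> y" "y \<le> x"
    have "DERIV ?f y :> 1 / (1 + y) - 1 + y"
      using y by (auto intro!: derivative_eq_intros simp: power2_eq_square)
    moreover have "1 / (1 + y) - 1 + y = y\<^sup>2 / (1 + y)"
      using y by (simp add: field_simps power2_eq_square)
    ultimately show "\<exists>z. DERIV ?f y :> z \<and> z \<ge> 0"
      using y by auto
  qed
  then show ?thesis by simp
qed

lemma exp_le_sqrt_one_plus_pow:
  fixes \<gamma> :: real
  assumes "\<gamma> \<ge> 0"
  shows "exp (real k * (\<gamma> - \<gamma>\<^sup>2)) \<le> sqrt (1 + 2 * \<gamma>) ^ k"
proof -
  have "2 * \<gamma> - (2 * \<gamma>)\<^sup>2 / 2 \<le> ln (1 + 2 * \<gamma>)"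
    using ln_one_plus_ge_sub_half_sq[of "2 * \<gamma>"] assms by simp
  then have "real k * (\<gamma> - \<gamma>\<^sup>2) \<le> real k * (ln (1 + 2 * \<gamma>) / 2)"
    by (intro mult_left_mono) (auto simp: power2_eq_square)
  then have "exp (real k * (\<gamma> - \<gamma>\<^sup>2)) \<le> exp (ln (sqrt (1 + 2 * \<gamma>))) ^ k"
    using assms by (simp add: ln_sqrt exp_of_nat_mult[symmetric])
  then show ?thesis
    using assms by simp
qed

lemma chernoff_exponent_bound:
  fixes k :: nat and t A A0 :: real
  assumes "k \<ge> 1" "A0 \<le> A"
  defines "s \<equiv> sqrt (2 * real k)"
  shows "exp (t + real k / s) * (exp (- (1 / s) * A / (1 + 2 * (1 / s))) / sqrt (1 + 2 * (1 / s)) ^ k)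
    \<le> exp (1 / 2 + t - A0 / (s + 2))"
proof -
  have s: "s > 0" "s\<^sup>2 = 2 * real k"
    using assms(1) unfolding s_def by auto
  have "real k * (1 / s - (1 / s)\<^sup>2) = real k / s - 1 / 2"
    using s assms(1) by (simp add: power_divide right_diff_distrib)
  then have mgf: "exp (real k / s - 1 / 2) \<le> sqrt (1 + 2 * (1 / s)) ^ k"
    using exp_le_sqrt_one_plus_pow[of "1 / s" k] s by simp
  have "- (1 / s) * A / (1 + 2 * (1 / s)) = - (A / (s + 2))"
    using s by (simp add: field_simps)
  then have "exp (t + real k / s) * exp (- (1 / s) * A / (1 + 2 * (1 / s))) = exp (t + real k / s - A / (s + 2))"
    by (simp add: exp_add[symmetric])
  also have "\<dots> \<le> exp (1 / 2 + t - A0 / (s + 2)) * exp (real k / s - 1 / 2)"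
    using s assms(2) by (simp add: exp_add[symmetric] divide_right_mono)
  also have "\<dots> \<le> exp (1 / 2 + t - A0 / (s + 2)) * sqrt (1 + 2 * (1 / s)) ^ k"
    using mgf by simp
  finally have "exp (t + real k / s) * exp (- (1 / s) * A / (1 + 2 * (1 / s)))
      \<le> exp (1 / 2 + t - A0 / (s + 2)) * sqrt (1 + 2 * (1 / s)) ^ k" .
  moreover have "sqrt (1 + 2 * (1 / s)) ^ k > 0"
    using s by (simp add: add_pos_pos)
  ultimately show ?thesis
    by (simp only: times_divide_eq_right pos_divide_le_eq)
qed

lemma nn_integral_noise_exp_norm_Proj_Zn:
  fixes \<theta> \<Delta> :: "real^'d::finite" and m :: "'d set"
  assumes "1 \<le> \<tau>" "\<tau> < n" "\<And>j. j \<notin> m \<Longrightarrow> \<Delta> $ j = 0" "\<gamma> \<ge> 0"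
  shows "(\<integral>\<^sup>+\<xi>. ennreal (exp (t - \<gamma> * (norm (Proj m (Zn n (obs \<theta> \<Delta> \<tau> \<xi>) \<tau>)))\<^sup>2)) \<partial>noise_space n)
    = ennreal (exp t * (exp (- \<gamma> * ((jump_scale n \<tau>)\<^sup>2 * (norm \<Delta>)\<^sup>2) / (1 + 2 * \<gamma>))
        / sqrt (1 + 2 * \<gamma>) ^ card m))"
proof -
  define a where "a j = (if j \<in> m then \<gamma> else 0)" for j
  have quadratic: "\<gamma> * (norm (Proj m z))\<^sup>2 = (\<Sum>j\<in>UNIV. a j * (z $ j)\<^sup>2)" for z :: "real^'d"
  proof -
    have "(\<Sum>j\<in>UNIV. a j * (z $ j)\<^sup>2) = (\<Sum>j\<in>UNIV. if j \<in> m then \<gamma> * (z $ j)\<^sup>2 else 0)"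
      by (intro sum.cong) (auto simp: a_def)
    then show ?thesis
      by (simp add: norm_Proj_sq sum.If_cases sum_distrib_left)
  qed
  have "(norm \<Delta>)\<^sup>2 = (\<Sum>j\<in>m. (\<Delta> $ j)\<^sup>2)"
    using norm_Proj_sq[of m \<Delta>] Proj_eq_self[of m \<Delta>] assms(3) by simp
  then have "(\<Sum>j\<in>m. (- jump_scale n \<tau> * \<Delta> $ j)\<^sup>2) = (jump_scale n \<tau>)\<^sup>2 * (norm \<Delta>)\<^sup>2"
    by (simp add: power_mult_distrib sum_distrib_left)
  then have "(\<Prod>j\<in>UNIV. nc_chisq_laplace (a j) 1 (- jump_scale n \<tau> * \<Delta> $ j))
      = exp (- \<gamma> * ((jump_scale n \<tau>)\<^sup>2 * (norm \<Delta>)\<^sup>2) / (1 + 2 * \<gamma>)) / sqrt (1 + 2 * \<gamma>) ^ card m"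
    unfolding a_def prod_nc_chisq_laplace_indicator by simp
  moreover have "(\<integral>\<^sup>+\<xi>. ennreal (exp (t - \<gamma> * (norm (Proj m (Zn n (obs \<theta> \<Delta> \<tau> \<xi>) \<tau>)))\<^sup>2)) \<partial>noise_space n)
      = ennreal (exp t * (\<Prod>j\<in>UNIV. nc_chisq_laplace (a j) 1 (- jump_scale n \<tau> * \<Delta> $ j)))"
    unfolding quadratic using assms(4) by (intro nn_integral_noise_exp_quadratic_Zn[OF assms(1,2)]) (simp add: a_def)
  ultimately show ?thesis
    by simp
qed

lemma integral_noise_le_type_II_bound:
  fixes \<theta> \<Delta> :: "real^'d::finite" and m :: "'d set" and f :: "(nat \<Rightarrow> 'd \<Rightarrow> real) \<Rightarrow> real"
  assumes tau: "1 \<le> \<tau>" "\<tau> < n" and m: "m \<noteq> {}" and supp: "\<And>j. j \<notin> m \<Longrightarrow> \<Delta> $ j = 0"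
    and r: "0 \<le> r" "r \<le> norm \<Delta>"
    and f: "\<And>\<xi>. f \<xi> \<le> exp (T - ((norm (Proj m (Zn n (obs \<theta> \<Delta> \<tau> \<xi>) \<tau>)))\<^sup>2 - real (card m))
                                  / sqrt (2 * real (card m)))"
  shows "integral\<^sup>L (noise_space n) f
    \<le> exp (1 / 2 + T - r\<^sup>2 * real n * hfun n \<tau> / (sqrt (2 * real (card m)) + 2))"
proof -
  define s where "s = sqrt (2 * real (card m))"
  define A where "A = (jump_scale n \<tau>)\<^sup>2 * (norm \<Delta>)\<^sup>2"
  have k: "card m \<ge> 1"
    using m by (simp add: Suc_le_eq card_gt_0_iff)
  have "r\<^sup>2 * real n * hfun n \<tau> \<le> A"
    using r tau power_mono[OF r(2) r(1)] unfolding A_def jump_scale_sq_hfun[OF less_imp_le[OF tau(2)]]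
    by (simp add: mult.commute mult_right_mono hfun_def)
  note bound = chernoff_exponent_bound[OF k this, of T, folded s_def]
  have "integral\<^sup>N (noise_space n) f
      \<le> (\<integral>\<^sup>+\<xi>. ennreal (exp ((T + real (card m) / s) - 1 / s * (norm (Proj m (Zn n (obs \<theta> \<Delta> \<tau> \<xi>) \<tau>)))\<^sup>2))
          \<partial>noise_space n)"
    using f unfolding s_def[symmetric] by (intro nn_integral_mono ennreal_leI) (simp add: diff_divide_distrib algebra_simps)
  also have "\<dots> = ennreal (exp (T + real (card m) / s)
      * (exp (- (1 / s) * A / (1 + 2 * (1 / s))) / sqrt (1 + 2 * (1 / s)) ^ card m))"
    unfolding A_def s_def by (intro nn_integral_noise_exp_norm_Proj_Zn[OF tau supp] divide_nonneg_nonneg) simp_all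
  also have "\<dots> \<le> ennreal (exp (1 / 2 + T - r\<^sup>2 * real n * hfun n \<tau> / (s + 2)))"
    using bound by (rule ennreal_leI)
  finally show ?thesis
    unfolding s_def by (rule integral_real_bounded[rotated]) simp
qed

lemma sqrt_exp: "sqrt (exp x) = exp (x / 2)"
  using exp_double[of "x / 2"] by (intro real_sqrt_unique) simp_all

lemma sqrt2_minus_one_div_le: "sqrt 2 \<le> s \<Longrightarrow> (sqrt 2 - 1) / s \<le> 1 / (s + 2)"
proof -
  assume s: "sqrt 2 \<le> s"
  have "sqrt 2 > 0" "sqrt 2 * sqrt 2 = 2" by auto
  moreover have "(2 - sqrt 2) * sqrt 2 \<le> (2 - sqrt 2) * s"
    using s by (intro mult_left_mono) (auto simp: real_sqrt_le_iff[of 2 4, simplified])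
  ultimately have "(sqrt 2 - 1) * (s + 2) \<le> s"
    by (simp add: algebra_simps)
  moreover have "s > 0"
    using s \<open>sqrt 2 > 0\<close> by linarith
  ultimately show ?thesis
    by (simp add: field_simps)
qed

lemma Theta_nonempty:
  assumes "1 \<le> p" "p \<le> CARD('d::finite)"
  shows "Theta p r \<noteq> ({} :: (real^'d) set)"
proof -
  obtain m :: "'d set" where m: "card m = p"
    using obtain_subset_with_card_n[of p "UNIV :: 'd set"] assms by auto
  then obtain j0 where j0: "j0 \<in> m"
    using assms by fastforce
  define \<epsilon> :: "'d \<Rightarrow> real" where "\<epsilon> j = (if j \<in> m then 1 else 0)" for j
  define \<Delta> :: "real^'d" where "\<Delta> = (\<chi> j. \<epsilon> j * r)"
  have "(\<Sum>j\<in>UNIV. \<epsilon> j) = real p"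
    unfolding \<epsilon>_def using m by (simp add: sum.If_cases)
  then have "\<Delta> \<in> Vpd p"
    unfolding Vpd_def \<Delta>_def by (intro CollectI exI[of _ "\<chi> j. r"] exI[of _ \<epsilon>]) (auto simp: \<epsilon>_def)
  moreover have "r \<le> norm \<Delta>"
    using component_le_norm_cart[of \<Delta> j0] j0 unfolding \<Delta>_def \<epsilon>_def by simp
  ultimately show ?thesis
    unfolding Theta_def by auto
qed

lemma Theta_support:
  assumes "\<Delta> \<in> Theta p r"
  obtains m :: "'d::finite set" where "card m = p" "\<And>j. j \<notin> m \<Longrightarrow> \<Delta> $ j = 0" "r \<le> norm \<Delta>"
proof -
  from assms obtain v \<epsilon> where \<Delta>: "\<Delta> = (\<chi> j. \<epsilon> j * v $ j)" and \<epsilon>: "\<forall>j. \<epsilon> j \<in> {0, 1}"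
    and card: "(\<Sum>j\<in>UNIV. \<epsilon> j) = real p" and "r \<le> norm \<Delta>"
    unfolding Theta_def Vpd_def by auto
  define m where "m = {j. \<epsilon> j = 1}"
  have "(\<Sum>j\<in>UNIV. \<epsilon> j) = (\<Sum>j\<in>UNIV. if j \<in> m then 1 else 0)"
    using \<epsilon> unfolding m_def by (intro sum.cong) auto
  then have "card m = p"
    using card by (simp add: sum.If_cases)
  moreover have "\<And>j. j \<notin> m \<Longrightarrow> \<Delta> $ j = 0"
    using \<epsilon> unfolding m_def \<Delta> by auto
  ultimately show ?thesis
    using that \<open>r \<le> norm \<Delta>\<close> by blast
qed

lemma one_minus_threshold_test_le_exp:
  fixes L T y :: real
  assumes "y \<le> L"
  shows "1 - (if L > T then 1 else 0) \<le> exp (T - y)"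
  using assms by auto

lemma beta_le:
  assumes "\<Theta> \<noteq> {}" "\<And>\<Delta>. \<Delta> \<in> \<Theta> \<Longrightarrow> integral\<^sup>L (noise_space n) (\<lambda>\<xi>. 1 - \<psi> (obs \<theta> \<Delta> \<tau> \<xi>)) \<le> B"
  shows "beta n \<theta> \<psi> \<Theta> \<tau> \<le> B"
  unfolding beta_def using assms by (intro cSup_least) auto

text \<open>The bound on \<open>c1\<close> in the theorem only makes the estimate nontrivial; the proof does not use it.\<close>
lemma beta_psi_lin_le:
  fixes \<theta> :: "real^'d::finite"
  assumes tau: "1 \<le> \<tau>" "\<tau> < n" and p: "1 \<le> p" "p \<le> CARD('d)" and "0 \<le> r"
    and H: "H \<le> (sqrt 2 - 1 - c1) * r\<^sup>2 * real n * hfun n \<tau> / sqrt (2 * real CARD('d))"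
  shows "beta n \<theta> (psi_lin H n \<tau>) (Theta p r) \<tau>
    \<le> sqrt (exp 1) * exp (- c1 * r\<^sup>2 * real n * hfun n \<tau> / sqrt (2 * real CARD('d)))"
proof (rule beta_le[OF Theta_nonempty[OF p]])
  define s where "s = sqrt (2 * real CARD('d))"
  define A0 where "A0 = r\<^sup>2 * real n * hfun n \<tau>"
  have "A0 \<ge> 0"
    unfolding A0_def hfun_def using tau by (simp add: divide_simps)
  moreover have "(sqrt 2 - 1) / s \<le> 1 / (s + 2)"
    unfolding s_def by (intro sqrt2_minus_one_div_le) simp
  ultimately have "(sqrt 2 - 1) / s * A0 \<le> A0 / (s + 2)"
    using mult_right_mono by fastforce
  moreover have "(sqrt 2 - 1 - c1) * A0 / s = (sqrt 2 - 1) / s * A0 - c1 * A0 / s"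
    by (simp add: diff_divide_distrib left_diff_distrib)
  moreover have "H \<le> (sqrt 2 - 1 - c1) * A0 / s"
    using H unfolding A0_def s_def by (simp add: mult.assoc)
  ultimately have "H - A0 / (s + 2) \<le> - c1 * A0 / s"
    by linarith
  fix \<Delta> :: "real^'d"
  assume "\<Delta> \<in> Theta p r"
  then have "r \<le> norm \<Delta>"
    unfolding Theta_def by simp
  have "integral\<^sup>L (noise_space n) (\<lambda>\<xi>. 1 - psi_lin H n \<tau> (obs \<theta> \<Delta> \<tau> \<xi>)) \<le> exp (1 / 2 + H - A0 / (s + 2))"
    unfolding A0_def s_def
    by (rule integral_noise_le_type_II_bound[OF tau, where m = UNIV and \<theta> = \<theta>, simplified])
      (auto simp: psi_lin_def L_lin_def intro: one_minus_threshold_test_le_exp \<open>0 \<le> r\<close> \<open>r \<le> norm \<Delta>\<close>)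
  also have "\<dots> \<le> exp (1 / 2 - c1 * A0 / s)"
    using \<open>H - A0 / (s + 2) \<le> - c1 * A0 / s\<close> by simp
  finally show "integral\<^sup>L (noise_space n) (\<lambda>\<xi>. 1 - psi_lin H n \<tau> (obs \<theta> \<Delta> \<tau> \<xi>))
      \<le> sqrt (exp 1) * exp (- c1 * r\<^sup>2 * real n * hfun n \<tau> / sqrt (2 * real CARD('d)))"
    unfolding sqrt_exp A0_def s_def by (simp add: exp_add[symmetric] mult.assoc)
qed

lemma beta_psi_scan_le:
  fixes \<theta> :: "real^'d::finite"
  assumes tau: "1 \<le> \<tau>" "\<tau> < n" and p: "1 \<le> p" "p \<le> CARD('d)" and "0 \<le> r" and "T > 0"
  defines "c2 \<equiv> inverse (1 + sqrt (2 / real p)) * (r\<^sup>2 * real n * hfun n \<tau> / (T * sqrt (2 * real p)))"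
  shows "beta n \<theta> (psi_scan p T n \<tau>) (Theta p r :: (real^'d) set) \<tau> \<le> sqrt (exp 1) * exp (- (c2 - 1) * T)"
proof (rule beta_le[OF Theta_nonempty[OF p]])
  define s where "s = sqrt (2 * real p)"
  have "s > 0"
    unfolding s_def using p by simp
  define q where "q = 1 + sqrt (2 / real p)"
  have "q > 0"
    unfolding q_def by (simp add: add_pos_nonneg)
  then have "c2 * T = r\<^sup>2 * real n * hfun n \<tau> / (q * s)"
    unfolding c2_def q_def[symmetric] s_def[symmetric] using \<open>T > 0\<close> \<open>s > 0\<close> by (simp add: field_simps)
  moreover have "q * s = s + 2"
    unfolding q_def s_def using p by (simp add: algebra_simps real_sqrt_mult[symmetric])
  ultimately have c2T: "c2 * T = r\<^sup>2 * real n * hfun n \<tau> / (s + 2)"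
    by simp
  fix \<Delta> :: "real^'d"
  assume "\<Delta> \<in> Theta p r"
  then obtain m :: "'d set" where m: "card m = p" "\<And>j. j \<notin> m \<Longrightarrow> \<Delta> $ j = 0" and "r \<le> norm \<Delta>"
    by (elim Theta_support) blast
  have "m \<noteq> {}"
    using m p by auto
  have scan_ge: "((norm (Proj m (Zn n X \<tau>)))\<^sup>2 - real p) / sqrt (2 * real p) \<le> L_scan p n X \<tau>"
    for X :: "nat \<Rightarrow> real^'d"
    unfolding L_scan_def using m by (intro Max_ge) (auto simp: Lfam_def)
  have "integral\<^sup>L (noise_space n) (\<lambda>\<xi>. 1 - psi_scan p T n \<tau> (obs \<theta> \<Delta> \<tau> \<xi>))
      \<le> exp (1 / 2 + T - r\<^sup>2 * real n * hfun n \<tau> / (s + 2))"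
    unfolding s_def
  proof (rule integral_noise_le_type_II_bound[where \<theta> = \<theta>, OF tau \<open>m \<noteq> {}\<close> m(2) \<open>0 \<le> r\<close>
        \<open>r \<le> norm \<Delta>\<close>, unfolded m(1)])
    fix \<xi>
    show "1 - psi_scan p T n \<tau> (obs \<theta> \<Delta> \<tau> \<xi>)
        \<le> exp (T - ((norm (Proj m (Zn n (obs \<theta> \<Delta> \<tau> \<xi>) \<tau>)))\<^sup>2 - real p) / sqrt (2 * real p))"
      unfolding psi_scan_def by (rule one_minus_threshold_test_le_exp) (rule scan_ge)
  qed
  also have "\<dots> = sqrt (exp 1) * exp (- (c2 - 1) * T)"
    unfolding sqrt_exp c2T[symmetric] by (simp add: exp_add[symmetric] algebra_simps)
  finally show "integral\<^sup>L (noise_space n) (\<lambda>\<xi>. 1 - psi_scan p T n \<tau> (obs \<theta> \<Delta> \<tau> \<xi>))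
      \<le> sqrt (exp 1) * exp (- (c2 - 1) * T)" .
qed

theorem mainTheorem6:
  fixes n p \<tau> :: nat and r :: real and \<theta> :: "real^'d::finite"
  assumes "n \<ge> 2" and "1 \<le> p" and "p \<le> CARD('d)"
    and "1 \<le> \<tau>" and "\<tau> \<le> n - 1" and "r > 0"
  shows "(\<forall>c1 H. 0 < c1 \<and> c1 < sqrt 2 - 1 \<and>
            H \<le> (sqrt 2 - 1 - c1) * r\<^sup>2 * real n * hfun n \<tau> / sqrt (2 * real CARD('d)) \<longrightarrow>
            beta n \<theta> (psi_lin H n \<tau>) (Theta p r) \<tau>
              \<le> sqrt (exp 1) * exp (- c1 * r\<^sup>2 * real n * hfun n \<tau> / sqrt (2 * real CARD('d))))
       \<and> (\<forall>T. T > 0 \<longrightarrow>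
            (let c2 = inverse (1 + sqrt (2 / real p)) * (r\<^sup>2 * real n * hfun n \<tau> / (T * sqrt (2 * real p)))
             in beta n \<theta> (psi_scan p T n \<tau>) (Theta p r :: (real^'d) set) \<tau>
                  \<le> sqrt (exp 1) * exp (- (c2 - 1) * T)))"
proof -
  have tau: "1 \<le> \<tau>" "\<tau> < n"
    using assms by auto
  have "0 \<le> r"
    using assms by simp
  show ?thesis
    using beta_psi_lin_le[OF tau assms(2,3) \<open>0 \<le> r\<close>] beta_psi_scan_le[OF tau assms(2,3) \<open>0 \<le> r\<close>]
    by (auto simp: Let_def)
qed

end
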